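(* Let $n$ be a positive integer and $x=(x_1,\ldots,x_n)\in C^n$. Let $|x|$ denote the number of indices $i$ such that $x_i$ is rational. Then the group of germs $G_{(nV,x)}$ is isomorphic to $\mathbb{Z}^{|x|}$.
   Context: Identify the Cantor set $C$ with $\{0,1\}^{\mathbb N}$, the set of infinite binary strings with the product topology. A point $s\in C$ is rational if it is eventually periodic, i.e. $s=Pww w\cdots$ for some finite binary string $P$ and some nonempty finite binary string $w$. For finite binary strings $P_0,\ldots,P_{n-1}$, the $n$-rectangle $(P_0,\ldots,P_{n-1})$ is $\{(P_0z_0,\ldots,P_{n-1}z_{n-1}): z_i\in C\}\subseteq C^n$ (concatenation of strings). For $n$-rectangles $D=(P_0,\ldots,P_{n-1})$, $R=(Q_0,\ldots,Q_{n-1})$, the $n$-rectangle map $\tau_{(D,R)}:D\to R$ sends $(P_0z_0,\ldots,P_{n-1}z_{n-1})\mapsto(Q_0z_0,\ldots,Q_{n-1}z_{n-1})$. A pattern is a partition of $C^n$ into finitely many $n$-rectangles. The group $nV$ consists of all homeomorphisms $f:C^n\to C^n$ for which there are a domain pattern $\{D_1,\ldots,D_k\}$ and a range pattern $\{R_1,\ldots,R_k\}$ with $f$ equal to the union of the maps $\tau_{(D_i,R_i)}$. For a group $K$ of homeomorphisms of a space $X$ and $x\in X$: $Fix_{(K,x)}=\{h\in K: h(x)=x\}$; $f\sim_x g$ if $f$ and $g$ agree on some neighborhood of $x$; $G_{(K,x)}$ is the set of $\sim_x$-classes $[h]_x$, a group under $[f]_x[g]_x=[fg]_x$. *)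

theory Defs
  imports "HOL-Analysis.Analysis" "HOL-Algebra.Product_Groups"
begin

text \<open>The Cantor set C = infinite binary strings, with the product topology
  of discrete two-point spaces; C^n is modelled as 'n \<Rightarrow> C for a finite index type 'n.\<close>

type_synonym cantor = "nat \<Rightarrow> bool"

definition cantor_top :: "cantor topology" where
  "cantor_top = product_topology (\<lambda>_. discrete_topology UNIV) UNIV"

definition cantor_pow_top :: "('n \<Rightarrow> cantor) topology" where
  "cantor_pow_top = product_topology (\<lambda>_. cantor_top) UNIV"

definition prepend :: "bool list \<Rightarrow> cantor \<Rightarrow> cantor" where
  "prepend P z = (\<lambda>k. if k < length P then P ! k else z (k - length P))"

definition cycle_str :: "bool list \<Rightarrow> cantor" where
  "cycle_str w = (\<lambda>k. w ! (k mod length w))"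

definition rational_pt :: "cantor \<Rightarrow> bool" where
  "rational_pt s \<longleftrightarrow> (\<exists>P w. w \<noteq> [] \<and> s = prepend P (cycle_str w))"

definition rect :: "('n \<Rightarrow> bool list) \<Rightarrow> ('n \<Rightarrow> cantor) set" where
  "rect D = {y. \<exists>z. y = (\<lambda>i. prepend (D i) (z i))}"

definition rect_map :: "('n \<Rightarrow> bool list) \<Rightarrow> ('n \<Rightarrow> bool list) \<Rightarrow> ('n \<Rightarrow> cantor) \<Rightarrow> ('n \<Rightarrow> cantor)" where
  "rect_map D R y = (\<lambda>i. prepend (R i) (\<lambda>k. y i (k + length (D i))))"

definition is_pattern :: "nat \<Rightarrow> (nat \<Rightarrow> ('n \<Rightarrow> bool list)) \<Rightarrow> bool" where
  "is_pattern k D \<longleftrightarrow>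
     (\<Union>j<k. rect (D j)) = UNIV \<and>
     (\<forall>j<k. \<forall>j'<k. j \<noteq> j' \<longrightarrow> rect (D j) \<inter> rect (D j') = {})"

definition nV :: "(('n \<Rightarrow> cantor) \<Rightarrow> ('n \<Rightarrow> cantor)) set" where
  "nV = {f. homeomorphic_map cantor_pow_top cantor_pow_top f \<and>
            (\<exists>k D R. is_pattern k D \<and> is_pattern k R \<and>
               (\<forall>j<k. \<forall>y\<in>rect (D j). f y = rect_map (D j) (R j) y))}"

definition Fix :: "('a \<Rightarrow> 'a) set \<Rightarrow> 'a \<Rightarrow> ('a \<Rightarrow> 'a) set" where
  "Fix K x = {h \<in> K. h x = x}"

definition germ_equiv :: "'a topology \<Rightarrow> 'a \<Rightarrow> ('a \<Rightarrow> 'a) \<Rightarrow> ('a \<Rightarrow> 'a) \<Rightarrow> bool" where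
  "germ_equiv X x f g \<longleftrightarrow> (\<exists>U. openin X U \<and> x \<in> U \<and> (\<forall>y\<in>U. f y = g y))"

definition germ :: "'a topology \<Rightarrow> ('a \<Rightarrow> 'a) set \<Rightarrow> 'a \<Rightarrow> ('a \<Rightarrow> 'a) \<Rightarrow> ('a \<Rightarrow> 'a) set" where
  "germ X K x h = {g \<in> Fix K x. germ_equiv X x g h}"

definition germ_group :: "'a topology \<Rightarrow> ('a \<Rightarrow> 'a) set \<Rightarrow> 'a \<Rightarrow> (('a \<Rightarrow> 'a) set) monoid" where
  "germ_group X K x =
     \<lparr>carrier = germ X K x ` Fix K x,
      monoid.mult = (\<lambda>A B. germ X K x ((SOME f. f \<in> A) \<circ> (SOME g. g \<in> B))),
      one = germ X K x id\<rparr>"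

end

theory Submission
  imports Defs
begin

text \<open>Near \<open>x\<close>, an element of \<open>nV\<close> fixing \<open>x\<close> keeps a long prefix of every coordinate \<open>x i\<close>
  and then shifts the remaining digits, reading them \<open>d i\<close> places further along.  Since the
  map fixes \<open>x\<close>, each \<open>d i\<close> is an eventual period of \<open>x i\<close>: it vanishes when \<open>x i\<close> is
  irrational and is a multiple of the minimal eventual period \<open>p i\<close> otherwise.  The shift
  vector \<open>d\<close> is an invariant of the germ, determines the germ, and is additive under
  composition.  Conversely every such vector is realized in \<open>nV\<close>: on each coordinate, a
  prefix replacement extends to a bijection between two partitions of the Cantor set into
  cones of the same size.  So the germ group is the lattice of these vectors, which is
  \<open>\<int>^|x|\<close> via \<open>d \<mapsto> (d i div p i)\<close>.\<close>

section \<open>Cones and cylinders\<close>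

definition str_cone :: "bool list \<Rightarrow> cantor set" where
  "str_cone Q = {y. \<forall>k<length Q. y k = Q ! k}"

definition str_prefix :: "cantor \<Rightarrow> nat \<Rightarrow> bool list" where
  "str_prefix s n = map s [0..<n]"

definition cylinder :: "nat \<Rightarrow> ('n \<Rightarrow> cantor) \<Rightarrow> ('n \<Rightarrow> cantor) set" where
  "cylinder N x = {y. \<forall>i k. k < N \<longrightarrow> y i k = x i k}"

lemma topspace_cantor_top [simp]: "topspace cantor_top = UNIV"
  by (simp add: cantor_top_def)

lemma topspace_cantor_pow_top [simp]: "topspace cantor_pow_top = UNIV"
  by (simp add: cantor_pow_top_def)

lemma length_str_prefix [simp]: "length (str_prefix s n) = n"
  by (simp add: str_prefix_def)

lemma nth_str_prefix [simp]: "k < n \<Longrightarrow> str_prefix s n ! k = s k"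
  by (simp add: str_prefix_def)

lemma mem_str_cone_str_prefix: "y \<in> str_cone (str_prefix s n) \<longleftrightarrow> (\<forall>k<n. y k = s k)"
  by (simp add: str_cone_def str_prefix_def)

lemma center_in_cylinder [simp]: "x \<in> cylinder N x"
  by (simp add: cylinder_def)

lemma str_cone_eq_PiE: "str_cone Q = (\<Pi>\<^sub>E k\<in>UNIV. if k < length Q then {Q ! k} else UNIV)"
  by (auto simp: str_cone_def PiE_iff split: if_splits)

lemma openin_str_cone: "openin cantor_top (str_cone Q)"
proof -
  have "finite {k. (if k < length Q then {Q ! k} else UNIV) \<noteq> (UNIV :: bool set)}"
    by (rule finite_subset[of _ "{..<length Q}"]) auto
  then show ?thesis
    unfolding cantor_top_def str_cone_eq_PiE by (intro product_topology_basis) auto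
qed

lemma str_cone_str_prefix_subset_openin:
  assumes "openin cantor_top S" "s \<in> S"
  obtains N where "str_cone (str_prefix s N) \<subseteq> S"
proof -
  obtain U where U: "finite {k \<in> UNIV. U k \<noteq> topspace (discrete_topology (UNIV :: bool set))}"
    "s \<in> Pi\<^sub>E UNIV U" "Pi\<^sub>E UNIV U \<subseteq> S"
    using assms unfolding cantor_top_def openin_product_topology_alt by blast
  have "finite {k. U k \<noteq> UNIV}" using U(1) by simp
  then obtain N where N: "{k. U k \<noteq> UNIV} \<subseteq> {..<N}"
    using finite_nat_bounded by blast
  have "str_cone (str_prefix s N) \<subseteq> Pi\<^sub>E UNIV U"
  proof
    fix y assume y: "y \<in> str_cone (str_prefix s N)"
    have "y k \<in> U k" for k
    proof (cases "U k = UNIV")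
      case False
      then have "k < N" using N by auto
      then have "y k = s k" using y by (simp add: mem_str_cone_str_prefix)
      moreover have "s k \<in> U k" using U(2) by blast
      ultimately show ?thesis by simp
    qed simp
    then show "y \<in> Pi\<^sub>E UNIV U" by auto
  qed
  then show ?thesis using U(3) by (intro that) blast
qed

lemma cylinder_eq_PiE: "cylinder N x = (\<Pi>\<^sub>E i\<in>UNIV. str_cone (str_prefix (x i) N))"
  by (auto simp: cylinder_def mem_str_cone_str_prefix PiE_iff)

lemma openin_cylinder: "openin cantor_pow_top (cylinder N (x :: 'n::finite \<Rightarrow> cantor))"
  unfolding cantor_pow_top_def cylinder_eq_PiE by (simp add: openin_PiE openin_str_cone)

lemma cylinder_subset_openin:
  fixes x :: "'n::finite \<Rightarrow> cantor"
  assumes "openin cantor_pow_top S" "x \<in> S"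
  obtains N where "cylinder N x \<subseteq> S"
proof -
  have "\<exists>U. finite {i \<in> UNIV. U i \<noteq> topspace cantor_top} \<and>
      (\<forall>i\<in>UNIV. openin cantor_top (U i)) \<and> x \<in> Pi\<^sub>E UNIV U \<and> Pi\<^sub>E UNIV U \<subseteq> S"
    using assms unfolding cantor_pow_top_def openin_product_topology_alt by (rule bspec)
  then obtain U where U: "\<And>i. openin cantor_top (U i)" "x \<in> Pi\<^sub>E UNIV U" "Pi\<^sub>E UNIV U \<subseteq> S"
    by blast
  have "\<exists>N. str_cone (str_prefix (x i) N) \<subseteq> U i" for i
  proof -
    have "x i \<in> U i" using U(2) by blast
    then show ?thesis using str_cone_str_prefix_subset_openin[OF U(1)] by blast
  qed
  then obtain NN where NN: "\<And>i. str_cone (str_prefix (x i) (NN i)) \<subseteq> U i" by metis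
  define N where "N = Max (range NN)"
  have "cylinder N x \<subseteq> Pi\<^sub>E UNIV U"
  proof
    fix y assume y: "y \<in> cylinder N x"
    have "y i \<in> str_cone (str_prefix (x i) (NN i))" for i
    proof -
      have "NN i \<le> N" unfolding N_def by (rule Max_ge) auto
      then show ?thesis using y by (simp add: cylinder_def mem_str_cone_str_prefix)
    qed
    then show "y \<in> Pi\<^sub>E UNIV U" using NN by auto
  qed
  with U(3) that show ?thesis by blast
qed

lemma continuous_map_cantor_digitwise:
  assumes "\<And>k. \<exists>N. \<forall>y y'. (\<forall>j<N. y j = y' j) \<longrightarrow> g y k = g y' k"
  shows "continuous_map cantor_top cantor_top g"
  unfolding cantor_top_def continuous_map_componentwise_UNIV
proof
  fix k
  obtain N where N: "\<forall>y y'. (\<forall>j<N. y j = y' j) \<longrightarrow> g y k = g y' k" using assms by blast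
  have "openin cantor_top {y. g y k \<in> V}" for V
  proof (subst openin_subopen, intro ballI)
    fix y assume y: "y \<in> {y. g y k \<in> V}"
    have "g z k = g y k" if "z \<in> str_cone (str_prefix y N)" for z
      using N that by (simp add: mem_str_cone_str_prefix)
    with y have "str_cone (str_prefix y N) \<subseteq> {y. g y k \<in> V}" by auto
    then show "\<exists>T. openin cantor_top T \<and> y \<in> T \<and> T \<subseteq> {y. g y k \<in> V}"
      by (intro exI[of _ "str_cone (str_prefix y N)"]) (simp add: openin_str_cone mem_str_cone_str_prefix)
  qed
  then show "continuous_map (product_topology (\<lambda>_. discrete_topology UNIV) UNIV)
      (discrete_topology UNIV) (\<lambda>y. g y k)"
    by (simp add: continuous_map_def cantor_top_def[symmetric])
qed

section \<open>Local shifts\<close>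

definition shift_map ::
    "('n \<Rightarrow> cantor) \<Rightarrow> ('n \<Rightarrow> nat) \<Rightarrow> ('n \<Rightarrow> int) \<Rightarrow> ('n \<Rightarrow> cantor) \<Rightarrow> ('n \<Rightarrow> cantor)" where
  "shift_map x K d y = (\<lambda>i k. if k < K i then x i k else y i (nat (int k + d i)))"

text \<open>The condition \<open>0 \<le> K i + d i\<close> ensures that \<open>nat\<close> never truncates a position read by
  \<open>shift_map x K d\<close>.\<close>

definition shift_stable :: "('n \<Rightarrow> cantor) \<Rightarrow> ('n \<Rightarrow> nat) \<Rightarrow> ('n \<Rightarrow> int) \<Rightarrow> bool" where
  "shift_stable x K d \<longleftrightarrow>
     (\<forall>i. 0 \<le> int (K i) + d i \<and> (\<forall>k\<ge>K i. x i (nat (int k + d i)) = x i k))"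

definition locally_shift ::
    "('n \<Rightarrow> cantor) \<Rightarrow> (('n \<Rightarrow> cantor) \<Rightarrow> ('n \<Rightarrow> cantor)) \<Rightarrow> ('n \<Rightarrow> int) \<Rightarrow> bool" where
  "locally_shift x f d \<longleftrightarrow>
     (\<exists>K N. shift_stable x K d \<and> (\<forall>y\<in>cylinder N x. f y = shift_map x K d y))"

lemma finite_index_bound: "\<exists>B. \<forall>i. (h :: 'n::finite \<Rightarrow> nat) i \<le> B"
  by (rule exI[of _ "Max (range h)"]) simp

lemma shift_stableD:
  assumes "shift_stable x K d"
  shows "0 \<le> int (K i) + d i" and "K i \<le> k \<Longrightarrow> x i (nat (int k + d i)) = x i k"
  using assms by (auto simp: shift_stable_def)

lemma shift_map_raise_threshold:
  assumes "shift_stable x K d" "\<And>i. K i \<le> L i" "\<And>i. int (L i) + d i \<le> int N"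
    and "y \<in> cylinder N x"
  shows "shift_map x K d y = shift_map x L d y"
proof (intro ext)
  fix i k
  show "shift_map x K d y i k = shift_map x L d y i k"
  proof (cases "K i \<le> k \<and> k < L i")
    case True
    then have "nat (int k + d i) < N" using assms(3)[of i] shift_stableD(1)[OF assms(1), of i] by linarith
    then have "y i (nat (int k + d i)) = x i (nat (int k + d i))"
      using assms(4) by (simp add: cylinder_def)
    also have "\<dots> = x i k" using True by (intro shift_stableD(2)[OF assms(1)]) simp
    finally show ?thesis using True by (simp add: shift_map_def)
  next
    case False
    then have "k < K i \<longleftrightarrow> k < L i" using assms(2)[of i] by linarith
    then show ?thesis by (simp add: shift_map_def)
  qed
qed

lemma locally_shift_above:
  fixes x :: "'n::finite \<Rightarrow> cantor"
  assumes "locally_shift x f d"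
  obtains K where "shift_stable x K d"
    and "\<And>L. (\<And>i. K i \<le> L i) \<Longrightarrow> \<exists>N. \<forall>y\<in>cylinder N x. f y = shift_map x L d y"
proof -
  obtain K N where K: "shift_stable x K d" and f: "\<forall>y\<in>cylinder N x. f y = shift_map x K d y"
    using assms unfolding locally_shift_def by blast
  have "\<exists>N'. \<forall>y\<in>cylinder N' x. f y = shift_map x L d y" if L: "\<And>i. K i \<le> L i" for L
  proof -
    obtain B where B: "\<And>i. L i + nat \<bar>d i\<bar> \<le> B"
      using finite_index_bound[of "\<lambda>i. L i + nat \<bar>d i\<bar>"] by blast
    have LB: "int (L i) + d i \<le> int (N + B)" for i
      using B[of i] by linarith
    have "f y = shift_map x L d y" if y: "y \<in> cylinder (N + B) x" for y
    proof -
      have "y \<in> cylinder N x" using y by (auto simp: cylinder_def)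
      then have "f y = shift_map x K d y" using f by blast
      also have "\<dots> = shift_map x L d y" by (rule shift_map_raise_threshold[OF K L LB y])
      finally show ?thesis .
    qed
    then show ?thesis by blast
  qed
  with K that show ?thesis by blast
qed

lemma locally_shift_germ_equiv:
  fixes x :: "'n::finite \<Rightarrow> cantor"
  assumes "locally_shift x f d" "locally_shift x g d"
  shows "germ_equiv cantor_pow_top x f g"
proof -
  obtain K1 where K1: "\<And>L. (\<And>i. K1 i \<le> L i) \<Longrightarrow> \<exists>N. \<forall>y\<in>cylinder N x. f y = shift_map x L d y"
    using locally_shift_above[OF assms(1)] by blast
  obtain K2 where K2: "\<And>L. (\<And>i. K2 i \<le> L i) \<Longrightarrow> \<exists>N. \<forall>y\<in>cylinder N x. g y = shift_map x L d y"
    using locally_shift_above[OF assms(2)] by blast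
  define L where "L = (\<lambda>i. max (K1 i) (K2 i))"
  obtain N1 N2 where "\<forall>y\<in>cylinder N1 x. f y = shift_map x L d y"
    and "\<forall>y\<in>cylinder N2 x. g y = shift_map x L d y"
    using K1[of L] K2[of L] by (auto simp: L_def)
  moreover have "y \<in> cylinder N1 x" "y \<in> cylinder N2 x" if "y \<in> cylinder (N1 + N2) x" for y
    using that by (auto simp: cylinder_def)
  ultimately have "\<forall>y\<in>cylinder (N1 + N2) x. f y = g y" by simp
  then show ?thesis
    unfolding germ_equiv_def by (intro exI[of _ "cylinder (N1 + N2) x"]) (simp add: openin_cylinder)
qed

lemma locally_shift_unique:
  fixes x :: "'n::finite \<Rightarrow> cantor"
  assumes f: "locally_shift x f d" and g: "locally_shift x g e"
    and fg: "germ_equiv cantor_pow_top x f g"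
  shows "d = e"
proof (rule ccontr)
  assume "d \<noteq> e"
  then obtain i where ne: "d i \<noteq> e i" by blast
  obtain K1 where K1: "shift_stable x K1 d"
    and f_above: "\<And>L. (\<And>i. K1 i \<le> L i) \<Longrightarrow> \<exists>N. \<forall>y\<in>cylinder N x. f y = shift_map x L d y"
    using locally_shift_above[OF f] by blast
  obtain K2 where K2: "shift_stable x K2 e"
    and g_above: "\<And>L. (\<And>i. K2 i \<le> L i) \<Longrightarrow> \<exists>N. \<forall>y\<in>cylinder N x. g y = shift_map x L e y"
    using locally_shift_above[OF g] by blast
  define L where "L = (\<lambda>i. max (K1 i) (K2 i))"
  obtain N1 N2 where f_eq: "\<forall>y\<in>cylinder N1 x. f y = shift_map x L d y"
    and g_eq: "\<forall>y\<in>cylinder N2 x. g y = shift_map x L e y"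
    using f_above[of L] g_above[of L] by (auto simp: L_def)
  obtain U where U: "openin cantor_pow_top U" "x \<in> U" "\<forall>y\<in>U. f y = g y"
    using fg unfolding germ_equiv_def by blast
  obtain N0 where N0: "cylinder N0 x \<subseteq> U" using cylinder_subset_openin[OF U(1,2)] by blast
  \<comment> \<open>flip the digit of \<open>x i\<close> at a position \<open>m\<close> beyond all thresholds; the two shifts read it off
     from the same output digit \<open>k\<close> only if \<open>d i = e i\<close>\<close>
  define m where "m = N0 + N1 + N2 + L i + nat \<bar>d i\<bar> + nat \<bar>e i\<bar>"
  define k where "k = nat (int m - d i)"
  define y where "y = (\<lambda>j l. if j = i \<and> l = m then \<not> x i m else x j l)"
  have y_cyl: "y \<in> cylinder M x" if "M \<le> m" for M using that by (auto simp: y_def cylinder_def)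
  have k: "int k = int m - d i" "L i \<le> k" "nat (int k + d i) = m" "nat (int k + e i) \<noteq> m"
    using ne unfolding k_def m_def by linarith+
  have "f y i k = (\<not> x i m)"
    using f_eq y_cyl[of N1] k by (simp add: m_def shift_map_def y_def)
  moreover have "g y i k = x i m"
  proof -
    have "g y i k = x i (nat (int k + e i))"
      using g_eq y_cyl[of N2] k by (simp add: m_def shift_map_def y_def)
    also have "\<dots> = x i k"
      using k(2) by (intro shift_stableD(2)[OF K2]) (simp add: L_def)
    also have "\<dots> = x i m"
      using k(2,3) shift_stableD(2)[OF K1, of i k] by (simp add: L_def)
    finally show ?thesis .
  qed
  moreover have "f y = g y" using U(3) N0 y_cyl[of N0] by (auto simp: m_def)
  ultimately show False by simp
qed

lemma shift_map_in_cylinder: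
  assumes "shift_stable x K e" "\<And>i. nat \<bar>e i\<bar> \<le> B" "y \<in> cylinder (N + B) x"
  shows "shift_map x K e y \<in> cylinder N x"
  unfolding cylinder_def
proof (intro CollectI allI impI)
  fix i k assume "k < N"
  show "shift_map x K e y i k = x i k"
  proof (cases "k < K i")
    case False
    have "nat (int k + e i) < N + B"
      using \<open>k < N\<close> assms(2)[of i] shift_stableD(1)[OF assms(1), of i] False by linarith
    then have "y i (nat (int k + e i)) = x i (nat (int k + e i))"
      using assms(3) by (simp add: cylinder_def)
    also have "\<dots> = x i k" using False by (intro shift_stableD(2)[OF assms(1)]) simp
    finally show ?thesis using False by (simp add: shift_map_def)
  qed (simp add: shift_map_def)
qed

lemma shift_map_shift_map:
  assumes "\<And>i. int (K i) \<le> int (L i) + d i"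
  shows "shift_map x L d (shift_map x K e y) = shift_map x L (\<lambda>i. d i + e i) y"
proof (intro ext)
  fix i k
  show "shift_map x L d (shift_map x K e y) i k = shift_map x L (\<lambda>i. d i + e i) y i k"
  proof (cases "k < L i")
    case False
    then have "\<not> nat (int k + d i) < K i" "nat (int (nat (int k + d i)) + e i) = nat (int k + (d i + e i))"
      using assms[of i] by linarith+
    then show ?thesis using False by (simp add: shift_map_def)
  qed (simp add: shift_map_def)
qed

lemma shift_stable_add:
  assumes K: "shift_stable x K d" and K': "shift_stable x K' e"
    and KL: "\<And>i. K i \<le> L i" and K'L: "\<And>i. int (K' i) \<le> int (L i) + d i"
  shows "shift_stable x L (\<lambda>i. d i + e i)"
  unfolding shift_stable_def
proof (intro allI conjI impI)
  fix i show "0 \<le> int (L i) + (d i + e i)"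
    using K'L[of i] shift_stableD(1)[OF K', of i] by linarith
next
  fix i k assume k: "L i \<le> k"
  have "K' i \<le> nat (int k + d i)" using K'L[of i] k by linarith
  then have "x i (nat (int (nat (int k + d i)) + e i)) = x i (nat (int k + d i))"
    by (rule shift_stableD(2)[OF K'])
  also have "\<dots> = x i k" using KL[of i] k by (intro shift_stableD(2)[OF K]) simp
  moreover have "nat (int (nat (int k + d i)) + e i) = nat (int k + (d i + e i))"
    using K'L[of i] k by linarith
  ultimately show "x i (nat (int k + (d i + e i))) = x i k" by simp
qed

lemma locally_shift_comp:
  fixes x :: "'n::finite \<Rightarrow> cantor"
  assumes f: "locally_shift x f d" and g: "locally_shift x g e"
  shows "locally_shift x (f \<circ> g) (\<lambda>i. d i + e i)"
proof -
  obtain K where K: "shift_stable x K d"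
    and f_above: "\<And>L. (\<And>i. K i \<le> L i) \<Longrightarrow> \<exists>N. \<forall>y\<in>cylinder N x. f y = shift_map x L d y"
    using locally_shift_above[OF f] by blast
  obtain K' N' where K': "shift_stable x K' e" and g_eq: "\<forall>y\<in>cylinder N' x. g y = shift_map x K' e y"
    using g unfolding locally_shift_def by blast
  \<comment> \<open>beyond the threshold \<open>L\<close>, \<open>f\<close> reads only positions beyond the threshold \<open>K'\<close> of \<open>g\<close>\<close>
  define L where "L = (\<lambda>i. K i + K' i + nat \<bar>d i\<bar>)"
  have KL: "K i \<le> L i" and K'L: "int (K' i) \<le> int (L i) + d i" for i
    unfolding L_def by linarith+
  obtain N where f_eq: "\<forall>y\<in>cylinder N x. f y = shift_map x L d y"
    using f_above[of L, OF KL] by blast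
  obtain B where B: "\<And>i. nat \<bar>e i\<bar> \<le> B" using finite_index_bound by blast
  have "(f \<circ> g) y = shift_map x L (\<lambda>i. d i + e i) y" if y: "y \<in> cylinder (N + B + N') x" for y
  proof -
    have "y \<in> cylinder N' x" "y \<in> cylinder (N + B) x" using y by (auto simp: cylinder_def)
    then have "g y = shift_map x K' e y" and "shift_map x K' e y \<in> cylinder N x"
      using g_eq shift_map_in_cylinder[OF K' B] by blast+
    then have "(f \<circ> g) y = shift_map x L d (shift_map x K' e y)" using f_eq by simp
    also have "\<dots> = shift_map x L (\<lambda>i. d i + e i) y" by (rule shift_map_shift_map[OF K'L])
    finally show ?thesis .
  qed
  moreover have "shift_stable x L (\<lambda>i. d i + e i)" by (rule shift_stable_add[OF K K' KL K'L])
  ultimately show ?thesis unfolding locally_shift_def by blast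
qed

section \<open>Eventual periods and admissible shift vectors\<close>

definition eventual_period :: "cantor \<Rightarrow> nat \<Rightarrow> bool" where
  "eventual_period s q \<longleftrightarrow> 0 < q \<and> (\<exists>K. \<forall>k\<ge>K. s (k + q) = s k)"

definition min_eventual_period :: "cantor \<Rightarrow> nat" where
  "min_eventual_period s = (LEAST q. eventual_period s q)"

lemma periodic_add_mult:
  assumes "\<forall>k\<ge>K. s (k + q) = s (k :: nat)" "K \<le> k"
  shows "s (k + q * m) = s k"
proof (induction m)
  case (Suc m)
  have "s (k + q * Suc m) = s ((k + q * m) + q)" by (simp add: algebra_simps)
  also have "\<dots> = s (k + q * m)" using assms by simp
  finally show ?case using Suc by simp
qed simp

lemma rational_pt_iff_eventual_period: "rational_pt s \<longleftrightarrow> (\<exists>q. eventual_period s q)"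
proof
  assume "rational_pt s"
  then obtain P w where w: "w \<noteq> []" "s = prepend P (cycle_str w)"
    unfolding rational_pt_def by blast
  have "s (k + length w) = s k" if "k \<ge> length P" for k
  proof -
    have "k + length w - length P = (k - length P) + length w" using that by simp
    then have "(k + length w - length P) mod length w = (k - length P) mod length w" by simp
    then show ?thesis using that unfolding w(2) prepend_def cycle_str_def by simp
  qed
  then show "\<exists>q. eventual_period s q" using w(1) unfolding eventual_period_def by blast
next
  assume "\<exists>q. eventual_period s q"
  then obtain q K where q: "0 < q" "\<forall>k\<ge>K. s (k + q) = s k"
    unfolding eventual_period_def by blast
  define w where "w = map (\<lambda>j. s (K + j)) [0..<q]"
  have "s k = prepend (map s [0..<K]) (cycle_str w) k" for k
  proof (cases "k < K")
    case False
    then have "k = (K + (k - K) mod q) + q * ((k - K) div q)" by simp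
    then have "s k = s (K + (k - K) mod q)" using periodic_add_mult[OF q(2)] by (metis le_add1)
    then show ?thesis using False q(1) by (simp add: prepend_def cycle_str_def w_def)
  qed (simp add: prepend_def)
  moreover have "w \<noteq> []" using q(1) by (simp add: w_def)
  ultimately show "rational_pt s" unfolding rational_pt_def by blast
qed

lemma eventual_period_min_eventual_period:
  "rational_pt s \<Longrightarrow> eventual_period s (min_eventual_period s)"
  unfolding min_eventual_period_def rational_pt_iff_eventual_period by (rule LeastI_ex)

lemma min_eventual_period_pos: "rational_pt s \<Longrightarrow> 0 < min_eventual_period s"
  using eventual_period_min_eventual_period eventual_period_def by blast

lemma min_eventual_period_dvd:
  assumes q: "eventual_period s q"
  shows "min_eventual_period s dvd q"
proof (rule ccontr)
  define p where "p = min_eventual_period s"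
  assume "\<not> min_eventual_period s dvd q"
  then have r: "0 < q mod p" unfolding p_def by (simp add: dvd_eq_mod_eq_0)
  have "rational_pt s" using q rational_pt_iff_eventual_period by blast
  then have p: "eventual_period s p" unfolding p_def by (rule eventual_period_min_eventual_period)
  obtain Kp where Kp: "\<forall>k\<ge>Kp. s (k + p) = s k" using p eventual_period_def by blast
  obtain Kq where Kq: "\<forall>k\<ge>Kq. s (k + q) = s k" using q eventual_period_def by blast
  \<comment> \<open>the remainder \<open>q mod p\<close> is again an eventual period, contradicting minimality of \<open>p\<close>\<close>
  have "s (k + q mod p) = s k" if "k \<ge> Kp + Kq" for k
  proof -
    have "s (k + q mod p) = s (k + q mod p + p * (q div p))"
      using that by (intro periodic_add_mult[OF Kp, symmetric]) simp
    also have "k + q mod p + p * (q div p) = k + q" by simp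
    also have "s (k + q) = s k" using Kq that by simp
    finally show ?thesis .
  qed
  then have "eventual_period s (q mod p)" using r unfolding eventual_period_def by blast
  then have "p \<le> q mod p" unfolding p_def min_eventual_period_def by (rule Least_le)
  moreover have "q mod p < p" using p eventual_period_def by simp
  ultimately show False by simp
qed

lemma shift_by_multiple_of_period:
  assumes per: "\<forall>k\<ge>K. s (k + p) = s (k :: nat)" and dvd: "int p dvd d" and k: "K + nat \<bar>d\<bar> \<le> k"
  shows "s (nat (int k + d)) = s k"
proof -
  obtain a where a: "d = int p * a" using dvd by (elim dvdE)
  show ?thesis
  proof (cases "0 \<le> a")
    case True
    then have "nat (int k + d) = k + p * nat a" using a by (simp add: nat_add_distrib nat_mult_distrib)
    then show ?thesis using k periodic_add_mult[OF per] by simp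
  next
    case False
    define j where "j = nat (int k + d)"
    have j: "int j = int k + d" "K \<le> j" using k unfolding j_def by linarith+
    have "int (j + p * nat (- a)) = int k" using False a j(1) by (simp add: algebra_simps)
    then have "k = j + p * nat (- a)" by (simp only: of_nat_eq_iff)
    then have "s k = s j" using periodic_add_mult[OF per j(2)] by metis
    then show ?thesis by (simp add: j_def)
  qed
qed

definition multiple_vectors :: "'n set \<Rightarrow> ('n \<Rightarrow> int) \<Rightarrow> ('n \<Rightarrow> int) set" where
  "multiple_vectors S p = {d. \<forall>i. (i \<in> S \<longrightarrow> p i dvd d i) \<and> (i \<notin> S \<longrightarrow> d i = 0)}"

definition admissible_shifts :: "('n \<Rightarrow> cantor) \<Rightarrow> ('n \<Rightarrow> int) set" where
  "admissible_shifts x =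
     multiple_vectors {i. rational_pt (x i)} (\<lambda>i. int (min_eventual_period (x i)))"

lemma locally_shift_eventual_period:
  assumes "locally_shift x f d" "d i \<noteq> 0"
  shows "eventual_period (x i) (nat \<bar>d i\<bar>)"
proof -
  obtain K where K: "shift_stable x K d" using assms(1) unfolding locally_shift_def by blast
  have "x i (k + nat \<bar>d i\<bar>) = x i k" if "K i + nat \<bar>d i\<bar> \<le> k" for k
  proof (cases "0 < d i")
    case True
    then show ?thesis using shift_stableD(2)[OF K, of i k] that by (simp add: nat_add_distrib)
  next
    case False
    have "x i (nat (int (k + nat \<bar>d i\<bar>) + d i)) = x i (k + nat \<bar>d i\<bar>)"
      using that by (intro shift_stableD(2)[OF K]) simp
    moreover have "nat (int (k + nat \<bar>d i\<bar>) + d i) = k" using False by simp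
    ultimately show ?thesis by metis
  qed
  then show ?thesis using assms(2) unfolding eventual_period_def by auto
qed

lemma locally_shift_admissible:
  assumes "locally_shift x f d"
  shows "d \<in> admissible_shifts x"
  unfolding admissible_shifts_def multiple_vectors_def
proof (intro CollectI allI conjI impI)
  fix i
  assume "i \<notin> {i. rational_pt (x i)}"
  then show "d i = 0"
    using locally_shift_eventual_period[OF assms] rational_pt_iff_eventual_period by blast
next
  fix i
  assume "i \<in> {i. rational_pt (x i)}"
  show "int (min_eventual_period (x i)) dvd d i"
  proof (cases "d i = 0")
    case False
    then have "min_eventual_period (x i) dvd nat \<bar>d i\<bar>"
      by (intro min_eventual_period_dvd locally_shift_eventual_period[OF assms])
    then have "int (min_eventual_period (x i)) dvd int (nat \<bar>d i\<bar>)" by (simp only: of_nat_dvd_iff)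
    then show ?thesis by simp
  qed simp
qed

lemma admissible_shift_stable:
  assumes "d \<in> admissible_shifts x"
  obtains K where "shift_stable x K d"
proof -
  have "\<exists>K. \<forall>k\<ge>K. x i (nat (int k + d i)) = x i k" for i
  proof (cases "rational_pt (x i)")
    case True
    then obtain K where "\<forall>k\<ge>K. x i (k + min_eventual_period (x i)) = x i k"
      using eventual_period_min_eventual_period eventual_period_def by blast
    moreover have "int (min_eventual_period (x i)) dvd d i"
      using assms True by (simp add: admissible_shifts_def multiple_vectors_def)
    ultimately show ?thesis using shift_by_multiple_of_period by blast
  next
    case False
    then show ?thesis using assms by (simp add: admissible_shifts_def multiple_vectors_def)
  qed
  then obtain K where K: "\<And>i k. K i \<le> k \<Longrightarrow> x i (nat (int k + d i)) = x i k" by metis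
  have "shift_stable x (\<lambda>i. K i + nat \<bar>d i\<bar>) d"
    unfolding shift_stable_def
  proof (intro allI conjI impI)
    fix i show "0 \<le> int (K i + nat \<bar>d i\<bar>) + d i" by linarith
  next
    fix i k assume "K i + nat \<bar>d i\<bar> \<le> k"
    then show "x i (nat (int k + d i)) = x i k" by (intro K) simp
  qed
  then show ?thesis by (rule that)
qed

section \<open>Rectangle maps fixing a point are local shifts\<close>

lemma prepend_in_str_cone: "prepend Q z \<in> str_cone Q"
  by (simp add: str_cone_def prepend_def)

lemma prepend_drop_str_cone: "y \<in> str_cone Q \<Longrightarrow> prepend Q (\<lambda>k. y (k + length Q)) = y"
  by (auto simp: str_cone_def prepend_def fun_eq_iff)

lemma drop_prepend: "(\<lambda>k. prepend Q z (k + length Q)) = z"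
  by (simp add: prepend_def)

lemma mem_rect_iff: "y \<in> rect D \<longleftrightarrow> (\<forall>i. y i \<in> str_cone (D i))"
proof
  assume "y \<in> rect D"
  then show "\<forall>i. y i \<in> str_cone (D i)" by (auto simp: rect_def prepend_in_str_cone)
next
  assume y: "\<forall>i. y i \<in> str_cone (D i)"
  show "y \<in> rect D"
    unfolding rect_def
    by (intro CollectI exI[of _ "\<lambda>i k. y i (k + length (D i))"])
      (use y in \<open>simp add: prepend_drop_str_cone\<close>)
qed

lemma rect_map_apply:
  "rect_map D R y i k = (if k < length (R i) then R i ! k
      else y i (nat (int k + (int (length (D i)) - int (length (R i))))))"
proof (cases "k < length (R i)")
  case False
  then have "nat (int k + (int (length (D i)) - int (length (R i)))) = k - length (R i) + length (D i)"
    by simp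
  then show ?thesis using False by (simp add: rect_map_def prepend_def)
qed (simp add: rect_map_def prepend_def)

lemma cylinder_subset_rect:
  fixes x :: "'n::finite \<Rightarrow> cantor"
  assumes "x \<in> rect D"
  obtains N where "cylinder N x \<subseteq> rect D"
proof
  define N where "N = Max (range (\<lambda>i. length (D i)))"
  show "cylinder N x \<subseteq> rect D"
  proof
    fix y assume y: "y \<in> cylinder N x"
    have "y i \<in> str_cone (D i)" for i
    proof -
      have "length (D i) \<le> N" unfolding N_def by (rule Max_ge) auto
      then show ?thesis
        using y assms unfolding mem_rect_iff by (simp add: cylinder_def str_cone_def)
    qed
    then show "y \<in> rect D" by (simp add: mem_rect_iff)
  qed
qed

lemma locally_shift_rect_map:
  fixes x :: "'n::finite \<Rightarrow> cantor"
  assumes x: "x \<in> rect D" and fx: "f x = x" and f: "\<And>y. y \<in> rect D \<Longrightarrow> f y = rect_map D R y"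
  shows "locally_shift x f (\<lambda>i. int (length (D i)) - int (length (R i)))"
proof -
  define K where "K = (\<lambda>i. length (R i))"
  define d where "d = (\<lambda>i. int (length (D i)) - int (length (R i)))"
  have map: "rect_map D R y i k = (if k < K i then R i ! k else y i (nat (int k + d i)))" for y i k
    unfolding K_def d_def by (rule rect_map_apply)
  have fixed: "rect_map D R x i k = x i k" for i k using f[OF x] fx by simp
  have R: "R i ! k = x i k" if "k < K i" for i k using fixed[of i k] that by (simp add: map)
  have "shift_stable x K d"
    unfolding shift_stable_def
  proof (intro allI conjI impI)
    fix i show "0 \<le> int (K i) + d i" by (simp add: K_def d_def)
  next
    fix i k assume "K i \<le> k"
    then show "x i (nat (int k + d i)) = x i k" using fixed[of i k] by (simp add: map)
  qed
  moreover obtain N where "cylinder N x \<subseteq> rect D" using cylinder_subset_rect[OF x] by blast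
  then have "\<forall>y\<in>cylinder N x. f y = shift_map x K d y"
    using f R by (auto simp: fun_eq_iff map shift_map_def)
  ultimately show ?thesis unfolding locally_shift_def d_def by blast
qed

lemma nV_locally_shift:
  fixes x :: "'n::finite \<Rightarrow> cantor"
  assumes f: "f \<in> nV" and fx: "f x = x"
  shows "\<exists>d. locally_shift x f d"
proof -
  obtain k D R where pat: "is_pattern k D" and f_eq: "\<forall>j<k. \<forall>y\<in>rect (D j). f y = rect_map (D j) (R j) y"
    using f unfolding nV_def by blast
  obtain j where j: "j < k" "x \<in> rect (D j)" using pat unfolding is_pattern_def by blast
  then have "\<And>y. y \<in> rect (D j) \<Longrightarrow> f y = rect_map (D j) (R j) y" using f_eq by blast
  then show ?thesis using locally_shift_rect_map[of x "D j" f "R j", OF j(2) fx] by blast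
qed

section \<open>Partitions into cones and prefix replacement\<close>

definition cone_partition :: "bool list list \<Rightarrow> bool" where
  "cone_partition Cs \<longleftrightarrow> (\<forall>y. \<exists>!j. j < length Cs \<and> y \<in> str_cone (Cs ! j))"

lemma cone_partition_iff_count:
  "cone_partition Cs \<longleftrightarrow> (\<forall>y. length (filter (\<lambda>c. y \<in> str_cone c) Cs) = 1)"
proof -
  have "(\<exists>!j. P j) \<longleftrightarrow> card {j. P j} = 1" for P :: "nat \<Rightarrow> bool"
    unfolding One_nat_def card_1_singleton_iff set_eq_iff mem_Collect_eq singleton_iff by metis
  then show ?thesis
    unfolding cone_partition_def length_filter_conv_card by simp
qed

text \<open>The \<open>k\<close>-th entry of \<open>complement_cones Q\<close> is the cone of the strings that agree with \<open>Q\<close>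
  before position \<open>k\<close> and differ from it at \<open>k\<close>.\<close>

fun complement_cones :: "bool list \<Rightarrow> bool list list" where
  "complement_cones [] = []"
| "complement_cones (b # Q) = [\<not> b] # map (Cons b) (complement_cones Q)"

lemma length_complement_cones [simp]: "length (complement_cones Q) = length Q"
  by (induction Q) simp_all

lemma str_cone_Nil [simp]: "str_cone [] = UNIV"
  by (simp add: str_cone_def)

lemma mem_str_cone_Cons: "y \<in> str_cone (b # Q) \<longleftrightarrow> y 0 = b \<and> (\<lambda>k. y (Suc k)) \<in> str_cone Q"
  by (auto simp: str_cone_def less_Suc_eq_0_disj)

lemma mem_str_cone_snoc: "y \<in> str_cone (c @ [b]) \<longleftrightarrow> y \<in> str_cone c \<and> y (length c) = b"
  by (auto simp: str_cone_def nth_append less_Suc_eq)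

lemma count_complement_cones:
  "length (filter (\<lambda>c. y \<in> str_cone c) (complement_cones Q)) = (if y \<in> str_cone Q then 0 else 1)"
proof (induction Q arbitrary: y)
  case Nil
  then show ?case by simp
next
  case (Cons b Q)
  then show ?case
    by (cases "y 0 = b") (simp_all add: mem_str_cone_Cons length_filter_map o_def)
qed

lemma cone_partition_complement_cones: "cone_partition (Q # complement_cones Q)"
  unfolding cone_partition_iff_count by (simp add: count_complement_cones)

lemma cone_partition_split_last:
  assumes "cone_partition (A @ [c])"
  shows "cone_partition (A @ [c @ [True], c @ [False]])"
proof -
  have "length (filter (\<lambda>c. y \<in> str_cone c) [c @ [True], c @ [False]])
      = length (filter (\<lambda>c. y \<in> str_cone c) [c])" for y
    by (simp add: mem_str_cone_snoc)
  then show ?thesis using assms unfolding cone_partition_iff_count by simp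
qed

lemma cone_partition_pad:
  "cone_partition (A @ [c]) \<Longrightarrow> \<exists>B. length B = Suc m \<and> cone_partition (A @ B)"
proof (induction m arbitrary: A c)
  case 0
  then show ?case by (intro exI[of _ "[c]"]) simp
next
  case (Suc m)
  have "cone_partition ((A @ [c @ [True]]) @ [c @ [False]])"
    using cone_partition_split_last[OF Suc.prems] by simp
  then obtain B where "length B = Suc m" "cone_partition ((A @ [c @ [True]]) @ B)"
    using Suc.IH by blast
  then show ?case by (intro exI[of _ "(c @ [True]) # B"]) simp
qed

lemma cone_partition_with_head:
  assumes "Q \<noteq> []" "length Q < m"
  obtains Cs where "length Cs = m" "cone_partition Cs" "Cs ! 0 = Q"
proof -
  define A where "A = Q # butlast (complement_cones Q)"
  have "complement_cones Q \<noteq> []" using assms(1) by (metis length_0_conv length_complement_cones)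
  then have "A @ [last (complement_cones Q)] = Q # complement_cones Q" by (simp add: A_def)
  then obtain B where B: "length B = Suc (m - length Q - 1)" "cone_partition (A @ B)"
    using cone_partition_pad cone_partition_complement_cones by metis
  have "length A = length Q" using assms(1) by (simp add: A_def)
  then have "length (A @ B) = m" using B(1) assms(2) by simp
  moreover have "(A @ B) ! 0 = Q" by (simp add: A_def)
  ultimately show ?thesis using B(2) that by blast
qed

lemma cone_partition_unique:
  assumes "cone_partition Cs" "j < length Cs" "y \<in> str_cone (Cs ! j)"
    "j' < length Cs" "y \<in> str_cone (Cs ! j')"
  shows "j = j'"
  using assms unfolding cone_partition_def by blast

definition prefix_swap :: "bool list list \<Rightarrow> bool list list \<Rightarrow> cantor \<Rightarrow> cantor" where
  "prefix_swap Ds Rs y = (let j = THE j. j < length Ds \<and> y \<in> str_cone (Ds ! j)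
     in prepend (Rs ! j) (\<lambda>k. y (k + length (Ds ! j))))"

lemma prefix_swap_eq:
  assumes "cone_partition Ds" "j < length Ds" "y \<in> str_cone (Ds ! j)"
  shows "prefix_swap Ds Rs y = prepend (Rs ! j) (\<lambda>k. y (k + length (Ds ! j)))"
proof -
  have "(THE j. j < length Ds \<and> y \<in> str_cone (Ds ! j)) = j"
    using assms cone_partition_unique[OF assms(1)] by blast
  then show ?thesis by (simp add: prefix_swap_def)
qed

lemma prefix_swap_inverse:
  assumes "cone_partition Ds" "cone_partition Rs" "length Ds = length Rs"
  shows "prefix_swap Rs Ds (prefix_swap Ds Rs y) = y"
proof -
  obtain j where j: "j < length Ds" "y \<in> str_cone (Ds ! j)"
    using assms(1) unfolding cone_partition_def by blast
  have "prefix_swap Ds Rs y = prepend (Rs ! j) (\<lambda>k. y (k + length (Ds ! j)))"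
    by (rule prefix_swap_eq[OF assms(1) j])
  moreover have "prefix_swap Rs Ds (prepend (Rs ! j) z) = prepend (Ds ! j) z" for z
    using prefix_swap_eq[OF assms(2) _ prepend_in_str_cone] j(1) assms(3) by (simp add: drop_prepend)
  ultimately show ?thesis using prepend_drop_str_cone[OF j(2)] by simp
qed

lemma continuous_map_prefix_swap:
  assumes Ds: "cone_partition Ds"
  shows "continuous_map cantor_top cantor_top (prefix_swap Ds Rs)"
proof (rule continuous_map_cantor_digitwise)
  fix k
  define S where "S = sum_list (map length Ds)"
  \<comment> \<open>the first \<open>S + k + 1\<close> input digits determine the cone of \<open>Ds\<close> and the output digit \<open>k\<close>\<close>
  have "prefix_swap Ds Rs y k = prefix_swap Ds Rs y' k" if agree: "\<forall>l<S + k + 1. y l = y' l" for y y'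
  proof -
    obtain j where j: "j < length Ds" "y \<in> str_cone (Ds ! j)"
      using Ds unfolding cone_partition_def by blast
    have len: "length (Ds ! j) \<le> S"
      unfolding S_def using j(1) by (intro member_le_sum_list) auto
    then have y': "y' \<in> str_cone (Ds ! j)" using j(2) agree by (simp add: str_cone_def)
    show ?thesis
    proof (cases "k < length (Rs ! j)")
      case False
      then have "y (k - length (Rs ! j) + length (Ds ! j)) = y' (k - length (Rs ! j) + length (Ds ! j))"
        using agree len by simp
      then show ?thesis
        using False by (simp add: prefix_swap_eq[OF Ds j] prefix_swap_eq[OF Ds j(1) y'] prepend_def)
    qed (simp add: prefix_swap_eq[OF Ds j] prefix_swap_eq[OF Ds j(1) y'] prepend_def)
  qed
  then show "\<exists>N. \<forall>y y'. (\<forall>l<N. y l = y' l) \<longrightarrow> prefix_swap Ds Rs y k = prefix_swap Ds Rs y' k"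
    by blast
qed

section \<open>Realizing admissible shift vectors\<close>

definition rect_swap ::
    "('n \<Rightarrow> bool list list) \<Rightarrow> ('n \<Rightarrow> bool list list) \<Rightarrow> ('n \<Rightarrow> cantor) \<Rightarrow> ('n \<Rightarrow> cantor)" where
  "rect_swap DS RS y = (\<lambda>i. prefix_swap (DS i) (RS i) (y i))"

lemma continuous_map_rect_swap:
  fixes DS :: "'n \<Rightarrow> bool list list"
  assumes "\<And>i. cone_partition (DS i)"
  shows "continuous_map cantor_pow_top cantor_pow_top (rect_swap DS RS)"
  unfolding cantor_pow_top_def continuous_map_componentwise_UNIV
proof
  fix i :: 'n
  have "continuous_map (product_topology (\<lambda>_. cantor_top) UNIV) cantor_top (\<lambda>y. y i)"
    by (rule continuous_map_product_projection) simp
  then show "continuous_map (product_topology (\<lambda>_. cantor_top) UNIV) cantor_top (\<lambda>y. rect_swap DS RS y i)"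
    using continuous_map_compose[OF _ continuous_map_prefix_swap[OF assms]]
    by (simp add: rect_swap_def o_def)
qed

lemma homeomorphic_map_rect_swap:
  assumes "\<And>i. cone_partition (DS i)" "\<And>i. cone_partition (RS i)" "\<And>i. length (DS i) = length (RS i)"
  shows "homeomorphic_map cantor_pow_top cantor_pow_top (rect_swap DS RS)"
proof -
  have "homeomorphic_maps cantor_pow_top cantor_pow_top (rect_swap DS RS) (rect_swap RS DS)"
    unfolding homeomorphic_maps_def
    using continuous_map_rect_swap[of DS] continuous_map_rect_swap[of RS] assms
      prefix_swap_inverse[OF assms(1,2,3)] prefix_swap_inverse[OF assms(2,1) assms(3)[symmetric]]
    by (simp add: rect_swap_def)
  then show ?thesis unfolding homeomorphic_map_maps by blast
qed

lemma is_pattern_product: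
  fixes DS :: "'n::finite \<Rightarrow> bool list list"
  assumes DS: "\<And>i. cone_partition (DS i)"
    and e: "bij_betw e {0..<k} (\<Pi>\<^sub>E i\<in>UNIV. {..<length (DS i)})"
  shows "is_pattern k (\<lambda>j i. DS i ! e j i)"
  unfolding is_pattern_def
proof (intro conjI allI impI)
  have "y \<in> (\<Union>j<k. rect (\<lambda>i. DS i ! e j i))" for y
  proof -
    have "\<forall>i. \<exists>t. t < length (DS i) \<and> y i \<in> str_cone (DS i ! t)"
      using DS unfolding cone_partition_def by blast
    then obtain t where t: "\<And>i. t i < length (DS i) \<and> y i \<in> str_cone (DS i ! t i)" by metis
    then have "t \<in> e ` {0..<k}" using bij_betw_imp_surj_on[OF e] by (auto simp: PiE_iff)
    then obtain j where "j < k" "e j = t" by auto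
    then show ?thesis using t by (auto simp: mem_rect_iff)
  qed
  then show "(\<Union>j<k. rect (\<lambda>i. DS i ! e j i)) = UNIV" by blast
next
  fix j j' assume j: "j < k" "j' < k" "j \<noteq> j'"
  then have "e j \<noteq> e j'" using bij_betw_imp_inj_on[OF e] by (auto simp: inj_on_def)
  then obtain i where i: "e j i \<noteq> e j' i" by auto
  have lens: "e j i < length (DS i)" "e j' i < length (DS i)"
    using bij_betwE[OF e] j by (auto simp: PiE_iff)
  show "rect (\<lambda>i. DS i ! e j i) \<inter> rect (\<lambda>i. DS i ! e j' i) = {}"
  proof (rule equals0I)
    fix y assume "y \<in> rect (\<lambda>i. DS i ! e j i) \<inter> rect (\<lambda>i. DS i ! e j' i)"
    then have "y i \<in> str_cone (DS i ! e j i)" "y i \<in> str_cone (DS i ! e j' i)"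
      by (auto simp: mem_rect_iff)
    then show False using cone_partition_unique[OF DS[of i] lens(1) _ lens(2)] i by blast
  qed
qed

lemma rect_swap_in_nV:
  fixes DS :: "'n::finite \<Rightarrow> bool list list"
  assumes DS: "\<And>i. cone_partition (DS i)" and RS: "\<And>i. cone_partition (RS i)"
    and len: "\<And>i. length (DS i) = length (RS i)"
  shows "rect_swap DS RS \<in> nV"
proof -
  let ?S = "\<Pi>\<^sub>E i\<in>UNIV. {..<length (DS i)}"
  have "finite ?S" by (intro finite_PiE) auto
  then obtain e where e: "bij_betw e {0..<card ?S} ?S" using ex_bij_betw_nat_finite by blast
  have e': "bij_betw e {0..<card ?S} (\<Pi>\<^sub>E i\<in>UNIV. {..<length (RS i)})" using e len by simp
  have "rect_swap DS RS y = rect_map (\<lambda>i. DS i ! e j i) (\<lambda>i. RS i ! e j i) y"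
    if "j < card ?S" "y \<in> rect (\<lambda>i. DS i ! e j i)" for j y
  proof -
    have "e j i < length (DS i)" for i using bij_betwE[OF e] that(1) by (auto simp: PiE_iff)
    then show ?thesis
      using prefix_swap_eq[OF DS] that(2) by (simp add: fun_eq_iff rect_swap_def rect_map_def mem_rect_iff)
  qed
  then show ?thesis
    unfolding nV_def
    using homeomorphic_map_rect_swap[of DS RS, OF DS RS len] is_pattern_product[OF DS e] is_pattern_product[OF RS e']
    by blast
qed

lemma rect_map_extends_to_nV:
  fixes D :: "'n::finite \<Rightarrow> bool list"
  assumes "\<And>i. D i \<noteq> []" "\<And>i. R i \<noteq> []"
  obtains h where "h \<in> nV" "\<And>y. y \<in> rect D \<Longrightarrow> h y = rect_map D R y"
proof -
  define m where "m = (\<lambda>i. Suc (length (D i) + length (R i)))"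
  have "\<exists>Ds. length Ds = m i \<and> cone_partition Ds \<and> Ds ! 0 = D i" for i
    using cone_partition_with_head[of "D i" "m i"] assms(1) by (auto simp: m_def)
  then obtain DS where DS: "\<And>i. length (DS i) = m i" "\<And>i. cone_partition (DS i)" "\<And>i. DS i ! 0 = D i"
    by metis
  have "\<exists>Rs. length Rs = m i \<and> cone_partition Rs \<and> Rs ! 0 = R i" for i
    using cone_partition_with_head[of "R i" "m i"] assms(2) by (auto simp: m_def)
  then obtain RS where RS: "\<And>i. length (RS i) = m i" "\<And>i. cone_partition (RS i)" "\<And>i. RS i ! 0 = R i"
    by metis
  have "rect_swap DS RS y = rect_map D R y" if "y \<in> rect D" for y
    using that prefix_swap_eq[OF DS(2), of 0] DS(1,3) RS(3)
    by (simp add: fun_eq_iff rect_swap_def rect_map_def mem_rect_iff m_def)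
  then show ?thesis using rect_swap_in_nV[of DS RS, OF DS(2) RS(2)] DS(1) RS(1) that by simp
qed

lemma admissible_shift_realized:
  fixes x :: "'n::finite \<Rightarrow> cantor"
  assumes "d \<in> admissible_shifts x"
  obtains h where "h \<in> Fix nV x" "locally_shift x h d"
proof -
  obtain K where K: "shift_stable x K d" using admissible_shift_stable[OF assms] by blast
  obtain B0 where B0: "\<And>i. K i + nat \<bar>d i\<bar> \<le> B0"
    using finite_index_bound[of "\<lambda>i. K i + nat \<bar>d i\<bar>"] by blast
  define B where "B = Suc B0"
  have B: "K i \<le> B" "0 < int B + d i" for i using B0[of i] unfolding B_def by linarith+
  \<comment> \<open>replace the prefix of length \<open>B + d i\<close> of \<open>x i\<close> by its prefix of length \<open>B\<close>; this fixes
     \<open>x\<close> because \<open>x i\<close> is invariant under the shift by \<open>d i\<close> beyond \<open>B\<close>\<close>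
  define D where "D = (\<lambda>i. str_prefix (x i) (nat (int B + d i)))"
  define R where "R = (\<lambda>i. str_prefix (x i) B)"
  have "D i \<noteq> []" "R i \<noteq> []" for i
    using B(2)[of i] by (auto simp: D_def R_def B_def simp flip: length_0_conv)
  then obtain h where h: "h \<in> nV" "\<And>y. y \<in> rect D \<Longrightarrow> h y = rect_map D R y"
    using rect_map_extends_to_nV by metis
  have x: "x \<in> rect D" by (simp add: mem_rect_iff D_def mem_str_cone_str_prefix)
  have shift: "int (length (D i)) - int (length (R i)) = d i" for i
    using B(2)[of i] by (simp add: D_def R_def)
  have "h x = x"
  proof (intro ext)
    fix i k
    show "h x i k = x i k"
      using h(2)[OF x] shift shift_stableD(2)[OF K, of i k] B(1)[of i]
      by (simp add: rect_map_apply R_def)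
  qed
  then have "locally_shift x h d" using locally_shift_rect_map[OF x _ h(2)] shift by simp
  then show ?thesis using \<open>h x = x\<close> h(1) that by (simp add: Fix_def)
qed

section \<open>The group of germs\<close>

lemma germ_equiv_refl: "x \<in> topspace X \<Longrightarrow> germ_equiv X x f f"
  unfolding germ_equiv_def by (intro exI[of _ "topspace X"]) simp

lemma germ_equiv_sym: "germ_equiv X x f g \<Longrightarrow> germ_equiv X x g f"
  unfolding germ_equiv_def by (simp add: eq_commute)

lemma germ_equiv_trans:
  assumes "germ_equiv X x f g" "germ_equiv X x g h"
  shows "germ_equiv X x f h"
proof -
  obtain U where U: "openin X U" "x \<in> U" "\<forall>y\<in>U. f y = g y"
    using assms(1) unfolding germ_equiv_def by blast
  obtain V where V: "openin X V" "x \<in> V" "\<forall>y\<in>V. g y = h y"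
    using assms(2) unfolding germ_equiv_def by blast
  have "openin X (U \<inter> V)" "x \<in> U \<inter> V" "\<forall>y\<in>U \<inter> V. f y = h y"
    using U V by auto
  then show ?thesis unfolding germ_equiv_def by blast
qed

lemma germ_eqI:
  assumes "germ_equiv X x g h"
  shows "germ X K x g = germ X K x h"
proof -
  have "germ_equiv X x f g \<longleftrightarrow> germ_equiv X x f h" for f
    using germ_equiv_trans[OF _ assms] germ_equiv_trans[OF _ germ_equiv_sym[OF assms]] by blast
  then show ?thesis unfolding germ_def by simp
qed

lemma mem_germ_self: "x \<in> topspace X \<Longrightarrow> h \<in> Fix K x \<Longrightarrow> h \<in> germ X K x h"
  by (simp add: germ_def germ_equiv_refl)

definition germ_rep :: "('a \<Rightarrow> 'a) set \<Rightarrow> 'a \<Rightarrow> 'a" where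
  "germ_rep A = (SOME f. f \<in> A)"

lemma germ_group_mult: "A \<otimes>\<^bsub>germ_group X K x\<^esub> B = germ X K x (germ_rep A \<circ> germ_rep B)"
  by (simp add: germ_group_def germ_rep_def)

lemma germ_in_germ_group: "h \<in> Fix K x \<Longrightarrow> germ X K x h \<in> carrier (germ_group X K x)"
  by (simp add: germ_group_def)

lemma germ_group_carrier_rep:
  assumes "x \<in> topspace X" "A \<in> carrier (germ_group X K x)"
  shows "germ_rep A \<in> Fix K x" and "A = germ X K x (germ_rep A)"
proof -
  obtain h where h: "h \<in> Fix K x" "A = germ X K x h" using assms(2) by (auto simp: germ_group_def)
  then have "h \<in> A" using mem_germ_self[OF assms(1)] by simp
  then have "germ_rep A \<in> A" unfolding germ_rep_def by (rule someI[of "\<lambda>f. f \<in> A"])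
  then have "germ_rep A \<in> Fix K x" "germ_equiv X x (germ_rep A) h" unfolding h(2) germ_def by auto
  then show "germ_rep A \<in> Fix K x" "A = germ X K x (germ_rep A)"
    using h(2) germ_eqI[of X x "germ_rep A" h K] by simp_all
qed

abbreviation nV_germs :: "('n \<Rightarrow> cantor) \<Rightarrow> (('n \<Rightarrow> cantor) \<Rightarrow> ('n \<Rightarrow> cantor)) set monoid" where
  "nV_germs x \<equiv> germ_group cantor_pow_top nV x"

definition germ_shift :: "('n \<Rightarrow> cantor) \<Rightarrow> (('n \<Rightarrow> cantor) \<Rightarrow> ('n \<Rightarrow> cantor)) set \<Rightarrow> 'n \<Rightarrow> int" where
  "germ_shift x A = (SOME d. locally_shift x (germ_rep A) d)"

lemma locally_shift_germ_rep:
  fixes x :: "'n::finite \<Rightarrow> cantor"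
  assumes "A \<in> carrier (nV_germs x)"
  shows "locally_shift x (germ_rep A) (germ_shift x A)"
proof -
  have "germ_rep A \<in> Fix nV x" using germ_group_carrier_rep[OF _ assms] by simp
  then have "\<exists>d. locally_shift x (germ_rep A) d" using nV_locally_shift by (auto simp: Fix_def)
  then show ?thesis unfolding germ_shift_def by (rule someI_ex)
qed

lemma germ_shift_eqI:
  fixes x :: "'n::finite \<Rightarrow> cantor"
  assumes A: "A \<in> carrier (nV_germs x)" and "h \<in> A" "locally_shift x h d"
  shows "germ_shift x A = d"
proof -
  have "A = germ cantor_pow_top nV x (germ_rep A)" using germ_group_carrier_rep[OF _ A] by simp
  then have "h \<in> germ cantor_pow_top nV x (germ_rep A)" using \<open>h \<in> A\<close> by simp
  then have "germ_equiv cantor_pow_top x (germ_rep A) h" by (simp add: germ_def germ_equiv_sym)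
  then show ?thesis using locally_shift_unique[OF locally_shift_germ_rep[OF A] assms(3)] by blast
qed

lemma germ_shift_mult:
  fixes x :: "'n::finite \<Rightarrow> cantor"
  assumes A: "A \<in> carrier (nV_germs x)" and B: "B \<in> carrier (nV_germs x)"
  shows "germ_shift x (A \<otimes>\<^bsub>nV_germs x\<^esub> B) = (\<lambda>i. germ_shift x A i + germ_shift x B i)"
proof -
  let ?d = "\<lambda>i. germ_shift x A i + germ_shift x B i"
  have comp: "locally_shift x (germ_rep A \<circ> germ_rep B) ?d"
    using locally_shift_comp locally_shift_germ_rep A B by blast
  \<comment> \<open>instead of showing that \<open>nV\<close> is closed under composition, realize the summed shift
     by an element of \<open>nV\<close>; it has the same germ as the composite\<close>
  obtain h where h: "h \<in> Fix nV x" "locally_shift x h ?d"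
    using admissible_shift_realized[OF locally_shift_admissible[OF comp]] by blast
  have AB: "A \<otimes>\<^bsub>nV_germs x\<^esub> B = germ cantor_pow_top nV x h"
    using germ_eqI[OF locally_shift_germ_equiv[OF comp h(2)]] by (simp add: germ_group_mult)
  have "A \<otimes>\<^bsub>nV_germs x\<^esub> B \<in> carrier (nV_germs x)"
    unfolding AB by (rule germ_in_germ_group[OF h(1)])
  moreover have "h \<in> A \<otimes>\<^bsub>nV_germs x\<^esub> B" using AB mem_germ_self[OF _ h(1)] by simp
  ultimately show ?thesis using germ_shift_eqI h(2) by blast
qed

lemma bij_betw_germ_shift:
  fixes x :: "'n::finite \<Rightarrow> cantor"
  shows "bij_betw (germ_shift x) (carrier (nV_germs x)) (admissible_shifts x)"
proof (rule bij_betw_imageI)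
  show "inj_on (germ_shift x) (carrier (nV_germs x))"
  proof (rule inj_onI)
    fix A B
    assume A: "A \<in> carrier (nV_germs x)" and B: "B \<in> carrier (nV_germs x)"
      and AB: "germ_shift x A = germ_shift x B"
    have "germ_equiv cantor_pow_top x (germ_rep A) (germ_rep B)"
      using locally_shift_germ_rep[OF A] locally_shift_germ_rep[OF B] AB
      by (simp add: locally_shift_germ_equiv)
    then show "A = B" using germ_group_carrier_rep(2)[OF _ A] germ_group_carrier_rep(2)[OF _ B] germ_eqI
      by (metis UNIV_I topspace_cantor_pow_top)
  qed
  show "germ_shift x ` carrier (nV_germs x) = admissible_shifts x"
  proof (intro subset_antisym subsetI)
    fix d assume "d \<in> germ_shift x ` carrier (nV_germs x)"
    then show "d \<in> admissible_shifts x" using locally_shift_admissible locally_shift_germ_rep by blast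
  next
    fix d assume "d \<in> admissible_shifts x"
    then obtain h where h: "h \<in> Fix nV x" "locally_shift x h d" by (rule admissible_shift_realized)
    have "h \<in> germ cantor_pow_top nV x h" using mem_germ_self[OF _ h(1)] by simp
    then have "germ_shift x (germ cantor_pow_top nV x h) = d"
      using germ_shift_eqI[OF germ_in_germ_group[OF h(1)] _ h(2)] by blast
    then show "d \<in> germ_shift x ` carrier (nV_germs x)"
      using germ_in_germ_group[OF h(1)] by blast
  qed
qed

definition multiple_coords :: "(nat \<Rightarrow> 'n) \<Rightarrow> ('n \<Rightarrow> int) \<Rightarrow> nat \<Rightarrow> ('n \<Rightarrow> int) \<Rightarrow> nat \<Rightarrow> int" where
  "multiple_coords r p m d = (\<lambda>j\<in>{..<m}. d (r j) div p (r j))"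

lemma bij_betw_multiple_coords:
  assumes r: "bij_betw r {..<card S} S" and p: "\<And>i. i \<in> S \<Longrightarrow> p i \<noteq> 0"
  shows "bij_betw (multiple_coords r p (card S)) (multiple_vectors S p) ({..<card S} \<rightarrow>\<^sub>E UNIV)"
proof -
  let ?r' = "the_inv_into {..<card S} r"
  have r_inv: "?r' (r j) = j" if "j < card S" for j
    using the_inv_into_f_f[OF bij_betw_imp_inj_on[OF r]] that by simp
  have r_in: "r j \<in> S" if "j < card S" for j using bij_betwE[OF r] that by blast
  have r_surj: "\<exists>j<card S. r j = i" if "i \<in> S" for i
    using bij_betw_imp_surj_on[OF r] that by force
  let ?u = "\<lambda>v i. if i \<in> S then v (?r' i) * p i else 0"
  show ?thesis
  proof (rule bij_betwI[where g = ?u])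
    show "multiple_coords r p (card S) \<in> multiple_vectors S p \<rightarrow> ({..<card S} \<rightarrow>\<^sub>E UNIV)"
      by (simp add: multiple_coords_def)
    show "?u \<in> ({..<card S} \<rightarrow>\<^sub>E UNIV) \<rightarrow> multiple_vectors S p"
      by (simp add: multiple_vectors_def)
  next
    fix d assume d: "d \<in> multiple_vectors S p"
    have "(if i \<in> S then multiple_coords r p (card S) d (?r' i) * p i else 0) = d i" for i
    proof (cases "i \<in> S")
      case True
      then obtain j where j: "j < card S" "i = r j" using r_surj by blast
      then show ?thesis
        using d True r_inv[OF j(1)] by (simp add: multiple_coords_def multiple_vectors_def)
    qed (use d in \<open>simp add: multiple_vectors_def\<close>)
    then show "?u (multiple_coords r p (card S) d) = d" by blast
  next
    fix v :: "nat \<Rightarrow> int" assume v: "v \<in> {..<card S} \<rightarrow>\<^sub>E UNIV"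
    have "multiple_coords r p (card S) (?u v) j = v j" for j
    proof (cases "j < card S")
      case True
      then show ?thesis using r_in[OF True] r_inv[OF True] p[OF r_in[OF True]]
        by (simp add: multiple_coords_def)
    next
      case False
      then show ?thesis using PiE_arb[of v _ _ j] v by (simp add: multiple_coords_def)
    qed
    then show "multiple_coords r p (card S) (?u v) = v" by blast
  qed
qed

lemma multiple_coords_add:
  assumes "\<And>j. j < m \<Longrightarrow> p (r j) dvd d (r j)"
  shows "multiple_coords r p m (\<lambda>i. d i + e i) = (\<lambda>j\<in>{..<m}. multiple_coords r p m d j + multiple_coords r p m e j)"
  using assms by (simp add: multiple_coords_def div_plus_div_distrib_dvd_left fun_eq_iff)

lemma multiple_vectors_coordinates:
  fixes S :: "'n set" and p :: "'n \<Rightarrow> int"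
  defines "H \<equiv> product_group {..<card S} (\<lambda>_. integer_group)"
  assumes S: "finite S" and p: "\<And>i. i \<in> S \<Longrightarrow> p i \<noteq> 0"
  obtains coords where "bij_betw coords (multiple_vectors S p) (carrier H)"
    and "\<And>d e. d \<in> multiple_vectors S p \<Longrightarrow> e \<in> multiple_vectors S p \<Longrightarrow>
      coords (\<lambda>i. d i + e i) = coords d \<otimes>\<^bsub>H\<^esub> coords e"
proof -
  obtain r where r: "bij_betw r {..<card S} S"
    using ex_bij_betw_nat_finite[OF S] by (auto simp: atLeast0LessThan)
  have "carrier H = {..<card S} \<rightarrow>\<^sub>E UNIV" by (simp add: H_def integer_group_def)
  then have "bij_betw (multiple_coords r p (card S)) (multiple_vectors S p) (carrier H)"
    using bij_betw_multiple_coords[OF r p] by simp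
  moreover have "multiple_coords r p (card S) (\<lambda>i. d i + e i)
      = multiple_coords r p (card S) d \<otimes>\<^bsub>H\<^esub> multiple_coords r p (card S) e"
    if "d \<in> multiple_vectors S p" for d e
    using that bij_betwE[OF r] multiple_coords_add[of "card S" p r d e]
    by (simp add: H_def integer_group_def multiple_vectors_def)
  ultimately show ?thesis by (rule that)
qed

theorem mainTheorem3:
  fixes x :: "'n::finite \<Rightarrow> cantor"
  shows "germ_group cantor_pow_top nV x \<cong>
           product_group {..<card {i. rational_pt (x i)}} (\<lambda>_. integer_group)"
proof -
  let ?H = "product_group {..<card {i. rational_pt (x i)}} (\<lambda>_. integer_group)"
  obtain coords where coords: "bij_betw coords (admissible_shifts x) (carrier ?H)"
    and coords_add: "\<And>d e. d \<in> admissible_shifts x \<Longrightarrow> e \<in> admissible_shifts x \<Longrightarrow>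
      coords (\<lambda>i. d i + e i) = coords d \<otimes>\<^bsub>?H\<^esub> coords e"
    by (rule multiple_vectors_coordinates[of "{i. rational_pt (x i)}"
          "\<lambda>i. int (min_eventual_period (x i))", folded admissible_shifts_def]) (simp_all add: min_eventual_period_pos)
  have bij: "bij_betw (coords \<circ> germ_shift x) (carrier (nV_germs x)) (carrier ?H)"
    by (rule bij_betw_trans[OF bij_betw_germ_shift coords])
  have "coords \<circ> germ_shift x \<in> hom (nV_germs x) ?H"
  proof (rule homI)
    fix A B assume A: "A \<in> carrier (nV_germs x)" and B: "B \<in> carrier (nV_germs x)"
    show "(coords \<circ> germ_shift x) (A \<otimes>\<^bsub>nV_germs x\<^esub> B) =
        (coords \<circ> germ_shift x) A \<otimes>\<^bsub>?H\<^esub> (coords \<circ> germ_shift x) B"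
      using germ_shift_mult[OF A B]
        coords_add[OF bij_betw_apply[OF bij_betw_germ_shift A] bij_betw_apply[OF bij_betw_germ_shift B]]
      by simp
  qed (use bij_betw_apply[OF bij] in simp)
  with bij show ?thesis by (intro is_isoI) (simp add: iso_def)
qed

end
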